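(* In the BBoxER framework described in the context, for fixed initial model $m_0$, seed $\omega$, algorithm $a$ and budget $b$, and any datasets $D_1,\dots,D_n$, $$\#\{\mathrm{BBoxER}(m_0,\omega,D_i,a,b): i\in\{1,\dots,n\}\}\le \sup_{D}\prod_{i=1}^b k_i(\omega,D,a,b).$$
   Context: $\mathrm{BBoxER}(m_0,\omega,D,a,b)$ is the model output by the following procedure: a black-box optimization algorithm $a$, deterministic given its seed $\omega$, is initialized from $\omega$; at each iteration $i=1,\dots,b$ it proposes a parameter $x_i$ and model $m_i=\mathrm{modified}(m_0,x_i)$ (for a fixed map $\mathrm{modified}$), declares a finite number $k_i=k_i(\omega,D,a,b)\ge1$ of possible comparison outcomes, and receives $\mathrm{choice}_i\in\{1,\dots,k_i\}$ computed by comparing $m_1,\dots,m_i$ on the dataset $D$; finally it recommends $\widehat x$ and outputs $\mathrm{modified}(m_0,\widehat x)$. The algorithm accesses $D$ only through the $\mathrm{choice}_i$, so $x_i,k_i$ are deterministic functions of $(\omega,a,b,\mathrm{choice}_1,\dots,\mathrm{choice}_{i-1})$ and $\widehat x$ is a deterministic function of $(\omega,a,b,\mathrm{choice}_1,\dots,\mathrm{choice}_b)$. The supremum is over all datasets. *)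

theory Defs
  imports Main "HOL-Library.Extended_Nat"
begin

text \<open>Abstract model of the BBoxER procedure.
  'x: parameters, 'm: models, 'd: datasets, 'w: seeds, 'a: algorithms.
  modified: the fixed map (m0, x) to modified model.
  propose w a b cs: parameter x_i proposed after receiving the choices cs = [choice_1,...,choice_(i-1)].
  arity w a b cs: number k_i of declared outcomes after choices cs.
  recommend w a b cs: recommended parameter after all b choices cs.
  compare D ms: outcome obtained by comparing models ms = [m_1,...,m_i] on dataset D.\<close>

fun bb_choices ::
  "('m \<Rightarrow> 'x \<Rightarrow> 'm) \<Rightarrow> ('w \<Rightarrow> 'a \<Rightarrow> nat \<Rightarrow> nat list \<Rightarrow> 'x)
   \<Rightarrow> ('d \<Rightarrow> 'm list \<Rightarrow> nat) \<Rightarrow> 'm \<Rightarrow> 'w \<Rightarrow> 'a \<Rightarrow> nat \<Rightarrow> 'd \<Rightarrow> nat \<Rightarrow> nat list" where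
  "bb_choices modified propose compare m0 w a b D 0 = []"
| "bb_choices modified propose compare m0 w a b D (Suc i) =
     (let cs = bb_choices modified propose compare m0 w a b D i;
          ms = map (\<lambda>j. modified m0 (propose w a b (take j cs))) [0..<Suc i]
      in cs @ [compare D ms])"

text \<open>k_i(w,D,a,b) for i = 1..b (here indexed by i-1).\<close>
definition bb_k where
  "bb_k modified propose arity compare m0 w a b D i =
     arity w a b (bb_choices modified propose compare m0 w a b D (i - 1))"

definition BBoxER where
  "BBoxER modified propose recommend compare m0 w a b D =
     modified m0 (recommend w a b (bb_choices modified propose compare m0 w a b D b))"

definition bb_valid where
  "bb_valid modified propose arity compare m0 w a b \<longleftrightarrow>
     (\<forall>D. \<forall>i\<in>{1..b}.
        bb_k modified propose arity compare m0 w a b D i \<ge> 1 \<and>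
        bb_choices modified propose compare m0 w a b D i ! (i - 1)
          \<in> {1..bb_k modified propose arity compare m0 w a b D i})"

end

theory Submission
  imports Defs
begin

text \<open>The algorithm sees a dataset only through its choice sequence, so the output is a function
  of that sequence, and the realised sequences are paths of length b in the decision tree whose
  node p has k(p) children. Counting such paths by splitting at the root shows that any set of
  them has at most as many elements as the largest product of arities along one of its paths.\<close>

definition tree_path :: "(nat list \<Rightarrow> nat) \<Rightarrow> nat \<Rightarrow> nat list \<Rightarrow> bool" where
  "tree_path k n s \<longleftrightarrow> length s = n \<and> (\<forall>i<n. s ! i \<in> {1..k (take i s)})"

lemma tree_path_0_iff: "tree_path k 0 s \<longleftrightarrow> s = []"
  by (simp add: tree_path_def)

lemma tree_path_Suc_iff:
  "tree_path k (Suc n) s \<longleftrightarrow>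
     (\<exists>c t. s = c # t \<and> c \<in> {1..k []} \<and> tree_path (\<lambda>p. k (c # p)) n t)"
  by (cases s) (auto simp: tree_path_def All_less_Suc2)

lemma card_tree_paths_le_prod:
  assumes "S \<noteq> {}" and "\<forall>s\<in>S. tree_path k n s"
  shows "\<exists>s\<in>S. card S \<le> (\<Prod>i<n. k (take i s))"
  using assms
proof (induction n arbitrary: k S)
  case 0
  then have "S = {[]}" by (auto simp: tree_path_0_iff)
  then show ?case by simp
next
  case (Suc n)
  show ?case
  proof (cases "finite S")
    case False  \<comment> \<open>then \<open>card S = 0\<close>\<close>
    then show ?thesis using Suc.prems(1) by auto
  next
    case finS: True
    define sub where "sub c = {t. c # t \<in> S}" for c
    define weight where "weight s = (\<Prod>i<n. k (take (Suc i) s))" for s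
    define M where "M = Max (weight ` S)"
    have S_split: "S = (\<Union>c\<in>{1..k []}. (#) c ` sub c)"
      using Suc.prems(2) unfolding sub_def tree_path_Suc_iff by fastforce
    have card_sub: "card (sub c) \<le> M" for c
    proof (cases "sub c = {}")
      case False
      have "\<forall>t\<in>sub c. tree_path (\<lambda>p. k (c # p)) n t"
        using Suc.prems(2) by (auto simp: sub_def tree_path_Suc_iff)
      then obtain t where "t \<in> sub c" and "card (sub c) \<le> (\<Prod>i<n. k (c # take i t))"
        using Suc.IH False by blast
      moreover have "weight (c # t) \<le> M"
        using \<open>t \<in> sub c\<close> finS by (simp add: M_def sub_def)
      ultimately show ?thesis by (simp add: weight_def)
    qed simp
    have "card S \<le> (\<Sum>c\<in>{1..k []}. card ((#) c ` sub c))"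
      by (subst S_split) (rule card_UN_le, simp)
    also have "\<dots> \<le> (\<Sum>c\<in>{1..k []}. M)"
      by (intro sum_mono) (simp add: card_image card_sub)
    finally have "card S \<le> k [] * M" by simp
    obtain s where "s \<in> S" and "M = weight s"
      using Max_in[of "weight ` S"] finS Suc.prems(1) unfolding M_def by blast
    have "k [] * weight s = (\<Prod>i<Suc n. k (take i s))"
      unfolding prod.lessThan_Suc_shift weight_def by simp
    with \<open>card S \<le> k [] * M\<close> \<open>M = weight s\<close> \<open>s \<in> S\<close> show ?thesis by auto
  qed
qed

context
  fixes modified :: "'m \<Rightarrow> 'x \<Rightarrow> 'm"
    and propose :: "'w \<Rightarrow> 'a \<Rightarrow> nat \<Rightarrow> nat list \<Rightarrow> 'x"
    and arity :: "'w \<Rightarrow> 'a \<Rightarrow> nat \<Rightarrow> nat list \<Rightarrow> nat"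
    and compare :: "'d \<Rightarrow> 'm list \<Rightarrow> nat"
    and m0 :: 'm and w :: 'w and a :: 'a and b :: nat
begin

abbreviation choices :: "'d \<Rightarrow> nat \<Rightarrow> nat list" where
  "choices \<equiv> bb_choices modified propose compare m0 w a b"

lemma length_bb_choices: "length (choices D i) = i"
  by (induction i) (simp_all add: Let_def)

lemma take_bb_choices: "i \<le> j \<Longrightarrow> take i (choices D j) = choices D i"
  by (induction j) (auto simp: Let_def length_bb_choices le_Suc_eq)

lemma prod_bb_k_eq:
  "(\<Prod>i\<in>{1..b}. bb_k modified propose arity compare m0 w a b D i)
     = (\<Prod>i<b. arity w a b (take i (choices D b)))"
  by (simp add: prod.atLeast1_atMost_eq bb_k_def take_bb_choices)

lemma tree_path_bb_choices:
  assumes "bb_valid modified propose arity compare m0 w a b"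
  shows "tree_path (arity w a b) b (choices D b)"
  unfolding tree_path_def
proof (intro conjI allI impI)
  fix i assume "i < b"
  then have "choices D (Suc i) ! i \<in> {1..arity w a b (choices D i)}"
    using assms by (force simp: bb_valid_def bb_k_def)
  moreover have "choices D b ! i = choices D (Suc i) ! i"
    using \<open>i < b\<close> take_bb_choices[of "Suc i" b D] by (metis Suc_leI lessI nth_take)
  ultimately show "choices D b ! i \<in> {1..arity w a b (take i (choices D b))}"
    using \<open>i < b\<close> by (simp add: take_bb_choices)
qed (rule length_bb_choices)

end

theorem theorem5:
  fixes modified :: "'m \<Rightarrow> 'x \<Rightarrow> 'm"
    and propose recommend :: "'w \<Rightarrow> 'a \<Rightarrow> nat \<Rightarrow> nat list \<Rightarrow> 'x"
    and arity :: "'w \<Rightarrow> 'a \<Rightarrow> nat \<Rightarrow> nat list \<Rightarrow> nat"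
    and compare :: "'d \<Rightarrow> 'm list \<Rightarrow> nat"
    and m0 :: 'm and w :: 'w and a :: 'a and b n :: nat
    and Ds :: "nat \<Rightarrow> 'd"
  assumes "bb_valid modified propose arity compare m0 w a b"
  shows "enat (card ((\<lambda>i. BBoxER modified propose recommend compare m0 w a b (Ds i)) ` {1..n}))
         \<le> (SUP D. enat (\<Prod>i\<in>{1..b}. bb_k modified propose arity compare m0 w a b D i))"
proof (cases "n = 0")
  case True
  then show ?thesis by (simp add: zero_enat_def[symmetric])
next
  case False
  let ?choices = "\<lambda>D. bb_choices modified propose compare m0 w a b D b"
  let ?S = "?choices ` Ds ` {1..n}"
  obtain D where D: "card ?S \<le> (\<Prod>i<b. arity w a b (take i (?choices D)))"
    using card_tree_paths_le_prod[of ?S "arity w a b" b] False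
      tree_path_bb_choices[OF assms] by fastforce
  have "card ((\<lambda>i. BBoxER modified propose recommend compare m0 w a b (Ds i)) ` {1..n})
      = card ((\<lambda>cs. modified m0 (recommend w a b cs)) ` ?S)"
    by (simp add: BBoxER_def image_image)
  also have "\<dots> \<le> card ?S"
    by (intro card_image_le) simp
  also have "\<dots> \<le> (\<Prod>i\<in>{1..b}. bb_k modified propose arity compare m0 w a b D i)"
    unfolding prod_bb_k_eq by (fact D)
  finally show ?thesis
    by (meson SUP_upper2 UNIV_I enat_ord_simps(1))
qed

end
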